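(* Suppose there exists a (possibly randomized) one-way communication protocol in which each message has at most $c$ bits and which solves $\mathrm{OvME}_{n,k,t}$ with probability at least $\frac12+\varepsilon$ for some $\varepsilon>0$. Then there exists a deterministic one-way protocol for $\mathrm{HLP}_{n,t}$ in which Alice sends at most $c$ bits and Bob answers correctly with probability at least $\frac12+\varepsilon/k$.
   Context: One-vs-Many-Expanders $\mathrm{OvME}_{n,k,t}$: $n$ vertices $V$, a uniformly random labeling $\Sigma$ partitioning $V$ into $t$ equal-size classes $\Sigma_1,\dots,\Sigma_t$, unknown to the players ($4t$ divides $n$). Players $P_1,\dots,P_k$; $P_i$ receives a matching $M_i$ of size $n/4$. With probability $1/2$ each: Yes-case, each $M_i$ independently uniform over all matchings of size $n/4$ on $V$; No-case, each $M_i$ independently uniform over matchings of size $n/4$ with exactly $n/(4t)$ edges inside each class $\Sigma_j$. Player $P_1$ sends a message to $P_2$, $P_2$ (knowing $M_2$ and the received message) to $P_3$, and so on; $P_k$ outputs Yes or No. Hidden Labeling Problem $\mathrm{HLP}_{n,t}$: Alice gets a uniformly random labeling $\Sigma$ of $V$ into $t$ equal-size classes, Bob gets a matching $M$ of size $n/4$; with probability $1/2$ each, Yes-case: $M$ uniform over all matchings of size $n/4$ on $V$; No-case: $M$ uniform over matchings of size $n/4$ with exactly $n/(4t)$ edges inside each class. Alice sends one message to Bob, who outputs Yes or No. Success probability is over the input distribution and protocol randomness. *)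

theory Defs
  imports "HOL-Probability.Probability"
begin

definition edges :: "nat \<Rightarrow> nat set set" where
  "edges n = {e. \<exists>u v. u < n \<and> v < n \<and> u \<noteq> v \<and> e = {u, v}}"

definition matchings :: "nat \<Rightarrow> nat \<Rightarrow> nat set set set" where
  "matchings n s = {M. M \<subseteq> edges n \<and> (\<forall>e\<in>M. \<forall>e'\<in>M. e \<noteq> e' \<longrightarrow> e \<inter> e' = {}) \<and> card M = s}"

definition labelings :: "nat \<Rightarrow> nat \<Rightarrow> (nat \<Rightarrow> nat) set" where
  "labelings n t = {\<sigma>. (\<forall>v. n \<le> v \<longrightarrow> \<sigma> v = 0) \<and> (\<forall>v<n. \<sigma> v < t) \<and>
                        (\<forall>j<t. card {v\<in>{0..<n}. \<sigma> v = j} = n div t)}"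

definition no_matchings :: "nat \<Rightarrow> nat \<Rightarrow> (nat \<Rightarrow> nat) \<Rightarrow> nat set set set" where
  "no_matchings n t \<sigma> = {M \<in> matchings n (n div 4).
      \<forall>j<t. card {e\<in>M. \<forall>v\<in>e. \<sigma> v = j} = n div (4 * t)}"

definition matching_dist :: "nat \<Rightarrow> nat \<Rightarrow> (nat \<Rightarrow> nat) \<Rightarrow> bool \<Rightarrow> nat set set pmf" where
  "matching_dist n t \<sigma> yes =
     (if yes then pmf_of_set (matchings n (n div 4)) else pmf_of_set (no_matchings n t \<sigma>))"

text \<open>Randomized one-way protocol for OvME (public randomness r drawn from R):
  player i (1 \<le> i < k) sends send i r m M_i, where m is the message received (empty for P_1);
  player k outputs out r m M_k (True = Yes).\<close>

fun ovme_msg :: "(nat \<Rightarrow> 'r \<Rightarrow> bool list \<Rightarrow> nat set set \<Rightarrow> bool list) \<Rightarrow> 'r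
                 \<Rightarrow> (nat \<Rightarrow> nat set set) \<Rightarrow> nat \<Rightarrow> bool list" where
  "ovme_msg send r Ms 0 = []"
| "ovme_msg send r Ms (Suc i) = send (Suc i) r (ovme_msg send r Ms i) (Ms (Suc i))"

definition ovme_success_prob ::
  "nat \<Rightarrow> nat \<Rightarrow> nat \<Rightarrow> 'r pmf \<Rightarrow> (nat \<Rightarrow> 'r \<Rightarrow> bool list \<Rightarrow> nat set set \<Rightarrow> bool list)
   \<Rightarrow> ('r \<Rightarrow> bool list \<Rightarrow> nat set set \<Rightarrow> bool) \<Rightarrow> real" where
  "ovme_success_prob n k t R send out =
     measure_pmf.prob
       (do { yes \<leftarrow> bernoulli_pmf (1/2);
             \<sigma> \<leftarrow> pmf_of_set (labelings n t);
             Ms \<leftarrow> Pi_pmf {1..k} {} (\<lambda>i. matching_dist n t \<sigma> yes);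
             r \<leftarrow> R;
             return_pmf (out r (ovme_msg send r Ms (k - 1)) (Ms k) = yes) })
       {True}"

definition hlp_success_prob ::
  "nat \<Rightarrow> nat \<Rightarrow> ((nat \<Rightarrow> nat) \<Rightarrow> bool list) \<Rightarrow> (bool list \<Rightarrow> nat set set \<Rightarrow> bool) \<Rightarrow> real" where
  "hlp_success_prob n t alice bob =
     measure_pmf.prob
       (do { yes \<leftarrow> bernoulli_pmf (1/2);
             \<sigma> \<leftarrow> pmf_of_set (labelings n t);
             M \<leftarrow> matching_dist n t \<sigma> yes;
             return_pmf (bob (alice \<sigma>) M = yes) })
       {True}"

end

theory Submission
  imports Defs
begin

text \<open>Hybrid argument. Let F j be the probability that player k answers Yes when players
1..j receive No-case and players j+1..k Yes-case matchings. Success 1/2 + \<epsilon> means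
F 0 - F k \<ge> 2\<epsilon>, so F j - F (j+1) \<ge> 2\<epsilon>/k for some j < k. Alice, knowing the labeling, simulates
players 1..j on No-case matchings she samples herself; Bob plays player j+1 with his own
matching and simulates players j+2..k on Yes-case matchings, which do not depend on the labeling.
His distinguishing advantage is F j - F (j+1), and averaging fixes all the randomness.\<close>

lemma measure_pmf_integrable_bounded:
  fixes f :: "'a \<Rightarrow> real" and p :: "'a pmf"
  assumes "\<And>x. \<bar>f x\<bar> \<le> B"
  shows "integrable (measure_pmf p) f"
  using assms by (intro measure_pmf.integrable_const_bound[where B = B]) auto

lemma measure_pmf_abs_integral_le:
  fixes f :: "'a \<Rightarrow> real" and p :: "'a pmf"
  assumes "\<And>x. \<bar>f x\<bar> \<le> B"
  shows "\<bar>\<integral>x. f x \<partial>p\<bar> \<le> B"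
proof -
  have "\<bar>\<integral>x. f x \<partial>p\<bar> \<le> (\<integral>x. \<bar>f x\<bar> \<partial>p)"
    by (rule integral_abs_bound)
  also have "\<dots> \<le> (\<integral>x. B \<partial>p)"
    using assms by (intro integral_mono measure_pmf_integrable_bounded[where B = B])
      (auto intro: order_trans[OF abs_ge_zero])
  finally show ?thesis by simp
qed

lemma measure_pmf_integral_diff_bounded:
  fixes f g :: "'a \<Rightarrow> real" and p :: "'a pmf"
  assumes "\<And>x. \<bar>f x\<bar> \<le> B" and "\<And>x. \<bar>g x\<bar> \<le> B"
  shows "(\<integral>x. f x \<partial>p) - (\<integral>x. g x \<partial>p) = (\<integral>x. f x - g x \<partial>p)"
  using assms by (intro Bochner_Integration.integral_diff[symmetric]
      measure_pmf_integrable_bounded[where B = B])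

lemma measure_pmf_exists_ge_integral:
  fixes f :: "'a \<Rightarrow> real" and p :: "'a pmf"
  assumes "\<And>x. \<bar>f x\<bar> \<le> B" and "a \<le> (\<integral>x. f x \<partial>p)"
  shows "\<exists>x\<in>set_pmf p. a \<le> f x"
proof (rule ccontr)
  assume "\<not> ?thesis"
  then have "(\<integral>x. f x \<partial>p) < (\<integral>x. a \<partial>p)"
    using assms(1) by (intro measure_pmf.integral_less_AE_space)
      (auto intro: measure_pmf_integrable_bounded simp: AE_measure_pmf_iff)
  with assms(2) show False by simp
qed

lemma abs_pmf_le_1: "\<bar>pmf p x\<bar> \<le> 1"
  using pmf_le_1[of p x] by simp

lemma pmf_bind_diff:
  "pmf (bind_pmf p f) x - pmf (bind_pmf p g) x = (\<integral>y. pmf (f y) x - pmf (g y) x \<partial>p)"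
  unfolding pmf_bind by (intro measure_pmf_integral_diff_bounded[where B = 1] abs_pmf_le_1)

lemma pmf_map_Not: "pmf (map_pmf Not p) True = 1 - pmf p True"
  using pmf_map_inj'[of Not p False] by (simp add: inj_def pmf_False_conv_True)

lemma pmf_bind_fair_coin:
  "pmf (bind_pmf (bernoulli_pmf (1/2)) P) x = (pmf (P True) x + pmf (P False) x) / 2"
  by (simp add: pmf_bind)

lemma measure_pmf_derandomize:
  fixes h :: "'p \<Rightarrow> 's \<Rightarrow> 'm \<Rightarrow> real"
    and S :: "'p pmf" and L :: "'s pmf" and A :: "'p \<Rightarrow> 's \<Rightarrow> 'm pmf"
  assumes bound: "\<And>\<rho> \<sigma> m. \<bar>h \<rho> \<sigma> m\<bar> \<le> 1"
    and avg: "\<delta> \<le> (\<integral>\<rho>. (\<integral>\<sigma>. (\<integral>m. h \<rho> \<sigma> m \<partial>A \<rho> \<sigma>) \<partial>L) \<partial>S)"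
  obtains \<rho> a where "\<And>\<sigma>. a \<sigma> \<in> set_pmf (A \<rho> \<sigma>)" and "\<delta> \<le> (\<integral>\<sigma>. h \<rho> \<sigma> (a \<sigma>) \<partial>L)"
proof -
  obtain \<rho> where \<rho>: "\<delta> \<le> (\<integral>\<sigma>. (\<integral>m. h \<rho> \<sigma> m \<partial>A \<rho> \<sigma>) \<partial>L)"
    using measure_pmf_exists_ge_integral[OF _ avg] bound
    by (meson measure_pmf_abs_integral_le)
  have "\<exists>m\<in>set_pmf (A \<rho> \<sigma>). (\<integral>m. h \<rho> \<sigma> m \<partial>A \<rho> \<sigma>) \<le> h \<rho> \<sigma> m" for \<sigma>
    using bound by (intro measure_pmf_exists_ge_integral) auto
  then obtain a where a: "\<And>\<sigma>. a \<sigma> \<in> set_pmf (A \<rho> \<sigma>)"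
    and ge: "\<And>\<sigma>. (\<integral>m. h \<rho> \<sigma> m \<partial>A \<rho> \<sigma>) \<le> h \<rho> \<sigma> (a \<sigma>)"
    by metis
  have "(\<integral>\<sigma>. (\<integral>m. h \<rho> \<sigma> m \<partial>A \<rho> \<sigma>) \<partial>L) \<le> (\<integral>\<sigma>. h \<rho> \<sigma> (a \<sigma>) \<partial>L)"
    using bound by (intro integral_mono ge measure_pmf_integrable_bounded measure_pmf_abs_integral_le)
  with \<rho> a that show ?thesis by fastforce
qed

lemma exists_step_ge_average:
  fixes F :: "nat \<Rightarrow> real"
  assumes "0 < k" and "d \<le> F 0 - F k"
  shows "\<exists>j<k. d / k \<le> F j - F (Suc j)"
proof (rule ccontr)
  assume "\<not> ?thesis"
  then have "F 0 - F k < (\<Sum>j<k. d / k)"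
    using assms(1) by (subst sum_lessThan_telescope'[symmetric], intro sum_strict_mono) auto
  with assms show False by simp
qed

lemma Pi_pmf_split_at:
  assumes "j < k"
  shows "Pi_pmf {1..k} dflt p =
    do {f \<leftarrow> Pi_pmf {1..j} dflt p; x \<leftarrow> p (Suc j); g \<leftarrow> Pi_pmf {Suc (Suc j)..k} dflt p;
        return_pmf ((\<lambda>i. if i \<in> {1..j} then f i else g i)(Suc j := x))}"
proof -
  have "{1..k} = insert (Suc j) ({1..j} \<union> {Suc (Suc j)..k})"
    using assms by auto
  then have "Pi_pmf {1..k} dflt p =
    do {x \<leftarrow> p (Suc j); f \<leftarrow> Pi_pmf {1..j} dflt p; g \<leftarrow> Pi_pmf {Suc (Suc j)..k} dflt p;
        return_pmf ((\<lambda>i. if i \<in> {1..j} then f i else g i)(Suc j := x))}"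
    by (simp only:, subst Pi_pmf_insert', simp, simp, subst Pi_pmf_union)
      (auto simp: pair_pmf_def map_pmf_def bind_assoc_pmf bind_return_pmf)
  then show ?thesis
    by (simp only: bind_commute_pmf[of "p (Suc j)"])
qed

fun ovme_msg_from :: "(nat \<Rightarrow> 'r \<Rightarrow> bool list \<Rightarrow> nat set set \<Rightarrow> bool list) \<Rightarrow> 'r
    \<Rightarrow> (nat \<Rightarrow> nat set set) \<Rightarrow> nat \<Rightarrow> bool list \<Rightarrow> nat \<Rightarrow> bool list" where
  "ovme_msg_from send r Ms j m 0 = m"
| "ovme_msg_from send r Ms j m (Suc d) =
     send (Suc (j + d)) r (ovme_msg_from send r Ms j m d) (Ms (Suc (j + d)))"

lemma ovme_msg_add: "ovme_msg send r Ms (j + d) = ovme_msg_from send r Ms j (ovme_msg send r Ms j) d"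
  by (induction d) auto

lemma ovme_msg_cong:
  "(\<And>i. 1 \<le> i \<Longrightarrow> i \<le> j \<Longrightarrow> Ms i = Ms' i) \<Longrightarrow> ovme_msg send r Ms j = ovme_msg send r Ms' j"
  by (induction j) auto

lemma ovme_msg_from_cong:
  "(\<And>i. j < i \<Longrightarrow> i \<le> j + d \<Longrightarrow> Ms i = Ms' i) \<Longrightarrow>
    ovme_msg_from send r Ms j m d = ovme_msg_from send r Ms' j m d"
  by (induction d) auto

lemma ovme_msg_length_le:
  "(\<And>i r m M. length (send i r m M) \<le> c) \<Longrightarrow> length (ovme_msg send r Ms j) \<le> c"
  by (cases j) auto

definition hlp_advantage ::
  "nat \<Rightarrow> nat \<Rightarrow> (bool list \<Rightarrow> nat set set \<Rightarrow> bool) \<Rightarrow> (nat \<Rightarrow> nat) \<Rightarrow> bool list \<Rightarrow> real" where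
  "hlp_advantage n t bob \<sigma> m =
     pmf (map_pmf (bob m) (matching_dist n t \<sigma> True)) True -
     pmf (map_pmf (bob m) (matching_dist n t \<sigma> False)) True"

lemma abs_hlp_advantage_le_1: "\<bar>hlp_advantage n t bob \<sigma> m\<bar> \<le> 1"
  using pmf_le_1 pmf_nonneg unfolding hlp_advantage_def abs_le_iff by smt

lemma hlp_success_prob_eq_advantage:
  "hlp_success_prob n t alice bob =
     1/2 + 1/2 * (\<integral>\<sigma>. hlp_advantage n t bob \<sigma> (alice \<sigma>) \<partial>pmf_of_set (labelings n t))"
proof -
  let ?L = "pmf_of_set (labelings n t)"
  let ?P = "\<lambda>yes. ?L \<bind> (\<lambda>\<sigma>. map_pmf (bob (alice \<sigma>)) (matching_dist n t \<sigma> yes))"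
  have succ: "hlp_success_prob n t alice bob = (pmf (?P True) True + pmf (map_pmf Not (?P False)) True) / 2"
    unfolding hlp_success_prob_def measure_pmf_single pmf_bind_fair_coin
    by (simp add: map_bind_pmf map_pmf_def bind_assoc_pmf bind_return_pmf)
  have adv: "pmf (?P True) True - pmf (?P False) True =
      (\<integral>\<sigma>. hlp_advantage n t bob \<sigma> (alice \<sigma>) \<partial>?L)"
    unfolding hlp_advantage_def pmf_bind_diff ..
  show ?thesis
    using succ adv by (simp add: pmf_map_Not)
qed

definition hybrid_prob :: "nat \<Rightarrow> nat \<Rightarrow> nat \<Rightarrow> 'r pmf
    \<Rightarrow> (nat \<Rightarrow> 'r \<Rightarrow> bool list \<Rightarrow> nat set set \<Rightarrow> bool list)
    \<Rightarrow> ('r \<Rightarrow> bool list \<Rightarrow> nat set set \<Rightarrow> bool) \<Rightarrow> nat \<Rightarrow> real" where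
  "hybrid_prob n k t R send out j =
     pmf (do { \<sigma> \<leftarrow> pmf_of_set (labelings n t);
               Ms \<leftarrow> Pi_pmf {1..k} {} (\<lambda>i. matching_dist n t \<sigma> (j < i));
               r \<leftarrow> R;
               return_pmf (out r (ovme_msg send r Ms (k - 1)) (Ms k)) }) True"

lemma ovme_success_prob_eq_hybrid:
  "ovme_success_prob n k t R send out =
     (1 + hybrid_prob n k t R send out 0 - hybrid_prob n k t R send out k) / 2"
proof -
  let ?H = "\<lambda>j. do { \<sigma> \<leftarrow> pmf_of_set (labelings n t);
               Ms \<leftarrow> Pi_pmf {1..k} {} (\<lambda>i. matching_dist n t \<sigma> (j < i));
               r \<leftarrow> R;
               return_pmf (out r (ovme_msg send r Ms (k - 1)) (Ms k)) }"
  have "Pi_pmf {1..k} {} (\<lambda>i. matching_dist n t \<sigma> yes) =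
      Pi_pmf {1..k} {} (\<lambda>i. matching_dist n t \<sigma> (if yes then 0 < i else k < i))" for \<sigma> yes
    by (intro Pi_pmf_cong) auto
  then have "ovme_success_prob n k t R send out =
      (pmf (?H 0) True + pmf (map_pmf Not (?H k)) True) / 2"
    unfolding ovme_success_prob_def measure_pmf_single pmf_bind_fair_coin
    by (simp add: map_bind_pmf)
  then show ?thesis
    unfolding hybrid_prob_def pmf_map_Not by simp
qed

definition hybrid_alice :: "nat \<Rightarrow> nat \<Rightarrow> (nat \<Rightarrow> 'r \<Rightarrow> bool list \<Rightarrow> nat set set \<Rightarrow> bool list)
    \<Rightarrow> nat \<Rightarrow> 'r \<Rightarrow> (nat \<Rightarrow> nat) \<Rightarrow> bool list pmf" where
  "hybrid_alice n t send j r \<sigma> =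
     map_pmf (\<lambda>Ms. ovme_msg send r Ms j) (Pi_pmf {1..j} {} (\<lambda>_. matching_dist n t \<sigma> False))"

definition hybrid_bob :: "nat \<Rightarrow> nat \<Rightarrow> (nat \<Rightarrow> 'r \<Rightarrow> bool list \<Rightarrow> nat set set \<Rightarrow> bool list)
    \<Rightarrow> ('r \<Rightarrow> bool list \<Rightarrow> nat set set \<Rightarrow> bool) \<Rightarrow> 'r \<Rightarrow> (nat \<Rightarrow> nat set set)
    \<Rightarrow> bool list \<Rightarrow> nat set set \<Rightarrow> bool" where
  "hybrid_bob k j send out r g m M =
     (let Ms = g(Suc j := M) in out r (ovme_msg_from send r Ms j m (k - 1 - j)) (Ms k))"

lemma ovme_output_split:
  assumes "j < k"
    and Ms: "Ms = (\<lambda>i. if i \<in> {1..j} then f i else g i)(Suc j := M)"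
  shows "out r (ovme_msg send r Ms (k - 1)) (Ms k) = hybrid_bob k j send out r g (ovme_msg send r f j) M"
proof -
  have "ovme_msg send r Ms (k - 1) = ovme_msg_from send r Ms j (ovme_msg send r Ms j) (k - 1 - j)"
    using ovme_msg_add[of send r Ms j "k - 1 - j"] assms(1) by simp
  also have "ovme_msg send r Ms j = ovme_msg send r f j"
    using Ms by (intro ovme_msg_cong) auto
  also have "ovme_msg_from send r Ms j (ovme_msg send r f j) (k - 1 - j) =
      ovme_msg_from send r (g(Suc j := M)) j (ovme_msg send r f j) (k - 1 - j)"
    using Ms by (intro ovme_msg_from_cong) auto
  finally have msg: "ovme_msg send r Ms (k - 1) =
      ovme_msg_from send r (g(Suc j := M)) j (ovme_msg send r f j) (k - 1 - j)" .
  have "Ms k = (g(Suc j := M)) k"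
    using assms by simp
  then show ?thesis
    by (simp only: hybrid_bob_def Let_def msg)
qed

lemma hybrid_step_eq_advantage:
  fixes R :: "'r pmf"
  assumes "j < k"
  shows "hybrid_prob n k t R send out j - hybrid_prob n k t R send out (Suc j) =
    (\<integral>\<rho>. (\<integral>\<sigma>. (\<integral>m. hlp_advantage n t (hybrid_bob k j send out (fst \<rho>) (snd \<rho>)) \<sigma> m
           \<partial>hybrid_alice n t send j (fst \<rho>) \<sigma>) \<partial>pmf_of_set (labelings n t))
       \<partial>pair_pmf R (Pi_pmf {Suc (Suc j)..k} {} (\<lambda>_. pmf_of_set (matchings n (n div 4)))))"
proof -
  define L where "L = pmf_of_set (labelings n t)"
  define W where "W = Pi_pmf {Suc (Suc j)..k} {} (\<lambda>_. pmf_of_set (matchings n (n div 4)))"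
  define A where "A = (\<lambda>(\<rho> :: 'r \<times> (nat \<Rightarrow> nat set set)) \<sigma>. hybrid_alice n t send j (fst \<rho>) \<sigma>)"
  define B where "B = (\<lambda>\<rho> :: 'r \<times> (nat \<Rightarrow> nat set set). hybrid_bob k j send out (fst \<rho>) (snd \<rho>))"
  have hybrid: "hybrid_prob n k t R send out i =
      pmf (pair_pmf R W \<bind> (\<lambda>\<rho>. L \<bind> (\<lambda>\<sigma>. A \<rho> \<sigma> \<bind>
             (\<lambda>m. map_pmf (B \<rho> m) (matching_dist n t \<sigma> (i \<le> j)))))) True"
    if "i = j \<or> i = Suc j" for i
  proof -
    define N where "N = (\<lambda>\<sigma>. Pi_pmf {1..j} {} (\<lambda>_. matching_dist n t \<sigma> False))"
    have "Pi_pmf {1..j} {} (\<lambda>i'. matching_dist n t \<sigma> (i < i')) = N \<sigma>" for \<sigma>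
      unfolding N_def using that by (intro Pi_pmf_cong) auto
    moreover have "Pi_pmf {Suc (Suc j)..k} {} (\<lambda>i'. matching_dist n t \<sigma> (i < i')) = W" for \<sigma>
      unfolding W_def using that by (intro Pi_pmf_cong) (auto simp: matching_dist_def)
    ultimately have "hybrid_prob n k t R send out i =
        pmf (do {\<sigma> \<leftarrow> L; f \<leftarrow> N \<sigma>; M \<leftarrow> matching_dist n t \<sigma> (i \<le> j); g \<leftarrow> W; r \<leftarrow> R;
                 return_pmf (hybrid_bob k j send out r g (ovme_msg send r f j) M)}) True"
      unfolding hybrid_prob_def Pi_pmf_split_at[OF assms] L_def
      by (simp only: ovme_output_split[OF assms refl] less_Suc_eq_le bind_assoc_pmf bind_return_pmf)
    also have "\<dots> =
        pmf (do {r \<leftarrow> R; g \<leftarrow> W; \<sigma> \<leftarrow> L; f \<leftarrow> N \<sigma>; M \<leftarrow> matching_dist n t \<sigma> (i \<le> j);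
                 return_pmf (hybrid_bob k j send out r g (ovme_msg send r f j) M)}) True"
      by (simp only: bind_commute_pmf[where B = W], simp only: bind_commute_pmf[where B = R])
    finally show ?thesis
      by (simp add: A_def B_def N_def hybrid_alice_def pair_pmf_def bind_map_pmf map_pmf_def
          bind_assoc_pmf bind_return_pmf)
  qed
  show ?thesis
    unfolding hybrid[OF disjI1[OF refl]] hybrid[OF disjI2[OF refl]] hlp_advantage_def
    by (simp only: pmf_bind_diff L_def W_def A_def B_def) simp
qed

theorem lemma5p4:
  fixes n k t c :: nat and \<epsilon> :: real
    and R :: "'r pmf"
    and send :: "nat \<Rightarrow> 'r \<Rightarrow> bool list \<Rightarrow> nat set set \<Rightarrow> bool list"
    and out :: "'r \<Rightarrow> bool list \<Rightarrow> nat set set \<Rightarrow> bool"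
  assumes "0 < t" and "(4 * t) dvd n" and "1 \<le> k"
    and "0 < \<epsilon>"
    and "\<And>i r m M. length (send i r m M) \<le> c"
    and "ovme_success_prob n k t R send out \<ge> 1/2 + \<epsilon>"
  shows "\<exists>alice bob. (\<forall>\<sigma>. length (alice \<sigma>) \<le> c) \<and>
           hlp_success_prob n t alice bob \<ge> 1/2 + \<epsilon> / k"
proof -
  let ?F = "hybrid_prob n k t R send out"
  have "2 * \<epsilon> \<le> ?F 0 - ?F k"
    using assms(6) by (simp add: ovme_success_prob_eq_hybrid)
  then obtain j where "j < k" and step: "2 * \<epsilon> / k \<le> ?F j - ?F (Suc j)"
    using exists_step_ge_average assms(3) by (metis less_le_trans zero_less_one)
  obtain \<rho> alice
    where alice: "\<And>\<sigma>. alice \<sigma> \<in> set_pmf (hybrid_alice n t send j (fst \<rho>) \<sigma>)"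
      and adv: "2 * \<epsilon> / k \<le> (\<integral>\<sigma>. hlp_advantage n t (hybrid_bob k j send out (fst \<rho>) (snd \<rho>)) \<sigma>
                   (alice \<sigma>) \<partial>pmf_of_set (labelings n t))"
    using step unfolding hybrid_step_eq_advantage[OF \<open>j < k\<close>]
    by (rule measure_pmf_derandomize[OF abs_hlp_advantage_le_1]) blast
  have "length (alice \<sigma>) \<le> c" for \<sigma>
    using alice[of \<sigma>] ovme_msg_length_le[OF assms(5)] by (auto simp: hybrid_alice_def)
  moreover have "1/2 + \<epsilon> / k \<le> hlp_success_prob n t alice (hybrid_bob k j send out (fst \<rho>) (snd \<rho>))"
    using adv by (simp add: hlp_success_prob_eq_advantage mult.commute)
  ultimately show ?thesis
    by blast
qed

end
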